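(* Let $N\ge1$, $\varphi,\gamma\in(0,1)$ with $\varphi+\gamma\ge1$, $\alpha=\min\{\varphi,\gamma\}$, and $\psi=\varphi/\gamma$ if $\varphi\le\gamma$, $\psi=\bar\varphi/\bar\gamma$ if $\varphi>\gamma$. Let $(X_t)_{t\ge0}$ be generated from $X_0$ and a sequence $(Z_t)_{t\ge1}$ of random elements of $\{0,1\}^N$ (independent of the uniforms) by the following rule: $(U(t,k))_{t,k}$ are i.i.d. Uniform$(0,1)$ and, independently for each $k\in[N]$, if $Z_t[k]=1$ then $X_t[k]=1$ iff $X_{t-1}[k]=0$ or ($X_{t-1}[k]=1$ and $U(t,k)\ge\bar\varphi/\gamma$); if $Z_t[k]=0$ and $\varphi\le\gamma$ then $X_t[k]=0$ iff $X_{t-1}[k]=0$ or ($X_{t-1}[k]=1$ and $U(t,k)\ge\psi$); if $Z_t[k]=0$ and $\varphi>\gamma$ then $X_t[k]=1$ iff $X_{t-1}[k]=1$ or ($X_{t-1}[k]=0$ and $U(t,k)\ge\psi$). Then for $t\in\mathbb{Z}_+$, conditional on $X_0$ and $(Z_\tau)_{\tau\le t}$, the coordinates of $X_t$ are independent and $X_t[k]$ is Bernoulli$(p_t[k])$ with $$p_t[k]=\varphi-(\gamma-\varphi)\sum_{l=1}^t\psi^l\prod_{j=t-l+1}^{t}\Big(1-\frac{Z_j[k]}{\alpha}\Big)-\big(\varphi-X_0[k]\big)\psi^t\prod_{j=1}^t\Big(1-\frac{Z_j[k]}{\alpha}\Big).$$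
   Context: $\bar a=1-a$; $[N]=\{1,\dots,N\}$; $\boldsymbol{x}[k]$ is the $k$-th coordinate of $\boldsymbol{x}\in\{0,1\}^N$. *)

theory Defs
  imports "HOL-Probability.Probability"
begin

definition alpha_par :: "real \<Rightarrow> real \<Rightarrow> real" where
  "alpha_par \<phi> \<gamma> = min \<phi> \<gamma>"

definition psi_par :: "real \<Rightarrow> real \<Rightarrow> real" where
  "psi_par \<phi> \<gamma> = (if \<phi> \<le> \<gamma> then \<phi> / \<gamma> else (1 - \<phi>) / (1 - \<gamma>))"

text \<open>The process, as a deterministic function of the initial state x0, the
  sequence z (z t k = Z_t[k]) and a realisation u of the uniforms (u t k = U(t,k)).
  Coordinates are booleans (True = 1).\<close>
fun Xproc :: "real \<Rightarrow> real \<Rightarrow> (nat \<Rightarrow> bool) \<Rightarrow> (nat \<Rightarrow> nat \<Rightarrow> bool)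
      \<Rightarrow> (nat \<Rightarrow> nat \<Rightarrow> real) \<Rightarrow> nat \<Rightarrow> nat \<Rightarrow> bool" where
  "Xproc \<phi> \<gamma> x0 z u 0 k = x0 k"
| "Xproc \<phi> \<gamma> x0 z u (Suc t) k =
     (let prev = Xproc \<phi> \<gamma> x0 z u t k; v = u (Suc t) k in
      if z (Suc t) k then
        (\<not> prev \<or> (prev \<and> v \<ge> (1 - \<phi>) / \<gamma>))
      else if \<phi> \<le> \<gamma> then
        \<not> (\<not> prev \<or> (prev \<and> v \<ge> psi_par \<phi> \<gamma>))
      else
        (prev \<or> (\<not> prev \<and> v \<ge> psi_par \<phi> \<gamma>)))"

definition p_prob :: "real \<Rightarrow> real \<Rightarrow> (nat \<Rightarrow> bool) \<Rightarrow> (nat \<Rightarrow> nat \<Rightarrow> bool) \<Rightarrow> nat \<Rightarrow> nat \<Rightarrow> real" where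
  "p_prob \<phi> \<gamma> x0 z t k =
     \<phi> - (\<gamma> - \<phi>) * (\<Sum>l = 1..t. psi_par \<phi> \<gamma> ^ l *
              (\<Prod>j = t - l + 1..t. (1 - of_bool (z j k) / alpha_par \<phi> \<gamma>)))
       - (\<phi> - of_bool (x0 k)) * psi_par \<phi> \<gamma> ^ t *
              (\<Prod>j = 1..t. (1 - of_bool (z j k) / alpha_par \<phi> \<gamma>))"

end

theory Submission
  imports Defs
begin

text \<open>Coordinate k of X_t is a function of X_0[k] and U(1,k), ..., U(t,k) alone. The blocks
  of uniforms belonging to different coordinates are disjoint, so the coordinates are independent.
  For the marginals, X_t[k] is independent of U(t+1,k); in each of the three transition rules this
  makes p_t = P(X_t[k]) obey the same affine recursion
  p_(t+1) = \<phi> + \<psi> (1 - Z_(t+1)[k] / \<alpha>) (p_t - \<gamma>), and p_prob is its explicit solution.\<close>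

lemma Xproc_cong:
  "(\<And>s. s \<in> {1..t} \<Longrightarrow> u s k = u' s k) \<Longrightarrow>
    Xproc \<phi> \<gamma> x0 z u t k = Xproc \<phi> \<gamma> x0 z u' t k"
  by (induction t) (auto simp: Let_def)

lemma Xproc_Suc:
  "Xproc \<phi> \<gamma> x0 z u (Suc t) k \<longleftrightarrow>
    (if z (Suc t) k then \<not> (Xproc \<phi> \<gamma> x0 z u t k \<and> u (Suc t) k < (1 - \<phi>) / \<gamma>)
     else if \<phi> \<le> \<gamma> then Xproc \<phi> \<gamma> x0 z u t k \<and> u (Suc t) k < psi_par \<phi> \<gamma>
     else \<not> (\<not> Xproc \<phi> \<gamma> x0 z u t k \<and> u (Suc t) k < psi_par \<phi> \<gamma>))"
  by (auto simp: Let_def)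

lemma measurable_Xproc:
  fixes u :: "nat \<Rightarrow> nat \<Rightarrow> 'b \<Rightarrow> real"
  assumes "\<And>s. s \<in> {1..t} \<Longrightarrow> u s k \<in> borel_measurable M"
  shows "Measurable.pred M (\<lambda>\<omega>. Xproc \<phi> \<gamma> x0 z (\<lambda>s j. u s j \<omega>) t k)"
  using assms
proof (induction t)
  case (Suc t)
  have [measurable]: "u (Suc t) k \<in> borel_measurable M"
    and [measurable]: "Measurable.pred M (\<lambda>\<omega>. Xproc \<phi> \<gamma> x0 z (\<lambda>s j. u s j \<omega>) t k)"
    using Suc by auto
  show ?case by (simp add: Let_def) measurable
qed simp

lemma p_prob_0: "p_prob \<phi> \<gamma> x0 z 0 k = of_bool (x0 k)"
  by (simp add: p_prob_def)

lemma p_prob_Suc: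
  "p_prob \<phi> \<gamma> x0 z (Suc t) k =
    \<phi> + psi_par \<phi> \<gamma> * (1 - of_bool (z (Suc t) k) / alpha_par \<phi> \<gamma>) * (p_prob \<phi> \<gamma> x0 z t k - \<gamma>)"
proof -
  define c where "c j = 1 - of_bool (z j k) / alpha_par \<phi> \<gamma>" for j
  define \<psi> where "\<psi> = psi_par \<phi> \<gamma>"
  have prod_Suc: "(\<Prod>j = Suc t - Suc l + 1..Suc t. c j) = c (Suc t) * (\<Prod>j = t - l + 1..t. c j)"
    if "l \<in> {1..t}" for l
    using that by (subst prod.nat_ivl_Suc') auto
  have "(\<Sum>l = 1..Suc t. \<psi> ^ l * (\<Prod>j = Suc t - l + 1..Suc t. c j))
      = \<psi> * c (Suc t) + (\<Sum>l = Suc 1..Suc t. \<psi> ^ l * (\<Prod>j = Suc t - l + 1..Suc t. c j))"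
    by (subst sum.atLeast_Suc_atMost) auto
  also have "(\<Sum>l = Suc 1..Suc t. \<psi> ^ l * (\<Prod>j = Suc t - l + 1..Suc t. c j))
      = (\<Sum>l = 1..t. \<psi> * c (Suc t) * (\<psi> ^ l * (\<Prod>j = t - l + 1..t. c j)))"
    unfolding sum.shift_bounds_cl_Suc_ivl by (intro sum.cong refl) (simp add: prod_Suc)
  finally have sum_Suc: "(\<Sum>l = 1..Suc t. \<psi> ^ l * (\<Prod>j = Suc t - l + 1..Suc t. c j))
      = \<psi> * c (Suc t) * (1 + (\<Sum>l = 1..t. \<psi> ^ l * (\<Prod>j = t - l + 1..t. c j)))"
    by (simp add: sum_distrib_left algebra_simps)
  have "(\<Prod>j = 1..Suc t. c j) = c (Suc t) * (\<Prod>j = 1..t. c j)"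
    by (subst prod.nat_ivl_Suc') auto
  then show ?thesis
    unfolding p_prob_def c_def[symmetric] \<psi>_def[symmetric] sum_Suc
    by (simp add: algebra_simps)
qed

lemma transition_affine:
  fixes \<phi> \<gamma> p :: real
  assumes "0 < \<phi>" "0 < \<gamma>" "\<gamma> < 1"
  shows "(if b then 1 - p * ((1 - \<phi>) / \<gamma>)
          else if \<phi> \<le> \<gamma> then p * psi_par \<phi> \<gamma>
          else 1 - (psi_par \<phi> \<gamma> - p * psi_par \<phi> \<gamma>))
       = \<phi> + psi_par \<phi> \<gamma> * (1 - of_bool b / alpha_par \<phi> \<gamma>) * (p - \<gamma>)"
proof (cases "\<phi> \<le> \<gamma>")
  case True
  then show ?thesis
    using assms by (cases b) (auto simp: psi_par_def alpha_par_def field_simps)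
next
  case False
  have \<psi>: "psi_par \<phi> \<gamma> * (1 - \<gamma>) = 1 - \<phi>"
    using False assms by (simp add: psi_par_def)
  then have scaled: "c * (psi_par \<phi> \<gamma> * (1 - \<gamma>)) = c * (1 - \<phi>)" for c
    by simp
  show ?thesis
    using \<psi> scaled[of p] scaled[of \<gamma>] False assms by (cases b) (auto simp: alpha_par_def field_simps)
qed

lemma (in prob_space) prob_uniform_less:
  fixes c :: real
  assumes "0 \<le> c" "c \<le> 1" and "V \<in> borel_measurable M"
    and "distr M lborel V = uniform_measure lborel {0<..<1}"
  shows "prob {\<omega> \<in> space M. V \<omega> < c} = c"
proof -
  have "prob {\<omega> \<in> space M. V \<omega> < c} = prob (V -` {..<c} \<inter> space M)"
    by (auto intro: arg_cong[where f = prob])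
  also have "\<dots> = measure (distr M lborel V) {..<c}"
    using assms(3) by (subst measure_distr) auto
  also have "\<dots> = measure lborel ({0<..<1} \<inter> {..<c}) / measure lborel {0<..<1::real}"
    unfolding assms(4) by (rule measure_uniform_measure) auto
  also have "{0<..<1} \<inter> {..<c} = {0<..<c}"
    using assms(2) by auto
  finally show ?thesis
    using assms(1) by simp
qed

locale uniform_noise = prob_space +
  fixes N :: nat and U :: "nat \<Rightarrow> nat \<Rightarrow> 'a \<Rightarrow> real"
  assumes indep_U: "indep_vars (\<lambda>_. borel) (\<lambda>(t, k). U t k) {(t, k). t \<ge> 1 \<and> k \<in> {1..N}}"
    and distr_U: "\<And>t k. t \<ge> 1 \<Longrightarrow> k \<in> {1..N} \<Longrightarrow>
      distr M lborel (U t k) = uniform_measure lborel {0<..<1}"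
begin

abbreviation X :: "real \<Rightarrow> real \<Rightarrow> (nat \<Rightarrow> bool) \<Rightarrow> (nat \<Rightarrow> nat \<Rightarrow> bool) \<Rightarrow> nat \<Rightarrow> nat \<Rightarrow> 'a \<Rightarrow> bool"
  where "X \<phi> \<gamma> x0 z t k \<omega> \<equiv> Xproc \<phi> \<gamma> x0 z (\<lambda>s j. U s j \<omega>) t k"

lemma measurable_U: "t \<ge> 1 \<Longrightarrow> k \<in> {1..N} \<Longrightarrow> U t k \<in> borel_measurable M"
  using indep_U by (auto simp: indep_vars_def)

lemma measurable_X: "k \<in> {1..N} \<Longrightarrow> Measurable.pred M (X \<phi> \<gamma> x0 z t k)"
  by (rule measurable_Xproc) (auto intro: measurable_U)

lemma X_eq_restrict:
  assumes "\<And>s. s \<in> {1..t} \<Longrightarrow> (s, k) \<in> K"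
  shows "Xproc \<phi> \<gamma> x0 z (\<lambda>s j. restrict (\<lambda>idx. case_prod U idx \<omega>) K (s, j)) t k = X \<phi> \<gamma> x0 z t k \<omega>"
  by (rule Xproc_cong) (use assms in auto)

lemma measurable_Xproc_restrict:
  assumes "\<And>s. s \<in> {1..t} \<Longrightarrow> (s, k) \<in> K"
  shows "Measurable.pred (PiM K (\<lambda>_. borel)) (\<lambda>f. Xproc \<phi> \<gamma> x0 z (\<lambda>s j. f (s, j)) t k)"
  by (rule measurable_Xproc, rule measurable_component_singleton) (use assms in auto)

lemma indep_vars_X: "indep_vars (\<lambda>_. count_space UNIV) (X \<phi> \<gamma> x0 z t) {1..N}"
proof -
  define K where "K k = {(s, k) | s. 1 \<le> s \<and> s \<le> t}" for k :: nat
  have "indep_vars (\<lambda>k. PiM (K k) (\<lambda>_. borel)) (\<lambda>k \<omega>. restrict (\<lambda>idx. case_prod U idx \<omega>) (K k)) {1..N}"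
    by (rule indep_vars_restrict[OF indep_U]) (auto simp: K_def disjoint_family_on_def)
  then have "indep_vars (\<lambda>_. count_space UNIV)
      (\<lambda>k \<omega>. Xproc \<phi> \<gamma> x0 z (\<lambda>s j. restrict (\<lambda>idx. case_prod U idx \<omega>) (K k) (s, j)) t k) {1..N}"
    (is "indep_vars _ ?Y _")
    by (rule indep_vars_compose2) (rule measurable_Xproc_restrict, auto simp: K_def)
  also have "?Y = X \<phi> \<gamma> x0 z t"
    by (intro ext X_eq_restrict) (auto simp: K_def)
  finally show ?thesis .
qed

lemma prob_X_and_U_less:
  assumes k: "k \<in> {1..N}" and c: "0 \<le> c" "c \<le> 1"
  shows "prob {\<omega> \<in> space M. X \<phi> \<gamma> x0 z t k \<omega> \<and> U (Suc t) k \<omega> < c}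
       = prob {\<omega> \<in> space M. X \<phi> \<gamma> x0 z t k \<omega>} * c"
proof -
  define K where "K i = (if i = 0 then {(s, k) | s. 1 \<le> s \<and> s \<le> t} else {(Suc t, k)})"
    for i :: nat
  define G where "G i = (if i = 0 then (\<lambda>f. Xproc \<phi> \<gamma> x0 z (\<lambda>s j. f (s, j)) t k)
      else (\<lambda>f. f (Suc t, k) < c))" for i :: nat
  define E where "E i = (\<lambda>\<omega>. G i (restrict (\<lambda>idx. case_prod U idx \<omega>) (K i))) -` {True} \<inter> space M"
    for i :: nat
  have "indep_vars (\<lambda>i. PiM (K i) (\<lambda>_. borel)) (\<lambda>i \<omega>. restrict (\<lambda>idx. case_prod U idx \<omega>) (K i)) {0, 1}"
    by (rule indep_vars_restrict[OF indep_U]) (use k in \<open>auto simp: K_def disjoint_family_on_def\<close>)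
  then have indep_G: "indep_vars (\<lambda>_. count_space UNIV)
      (\<lambda>i \<omega>. G i (restrict (\<lambda>idx. case_prod U idx \<omega>) (K i))) {0, 1}"
  proof (rule indep_vars_compose2)
    fix i :: nat
    show "G i \<in> measurable (PiM (K i) (\<lambda>_. borel)) (count_space UNIV)"
    proof (cases "i = 0")
      case True
      then show ?thesis
        unfolding G_def by simp (rule measurable_Xproc_restrict, simp add: K_def)
    next
      case False
      have [measurable]: "(\<lambda>f. f (Suc t, k)) \<in> borel_measurable (PiM (K i) (\<lambda>_. borel))"
        using False by (intro measurable_component_singleton) (simp add: K_def)
      show ?thesis
        using False unfolding G_def by simp measurable
    qed
  qed
  have "G 0 (restrict (\<lambda>idx. case_prod U idx \<omega>) (K 0)) = X \<phi> \<gamma> x0 z t k \<omega>" for \<omega>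
    unfolding G_def by (simp only: if_P[OF refl]) (rule X_eq_restrict, simp add: K_def)
  then have "E 0 = {\<omega> \<in> space M. X \<phi> \<gamma> x0 z t k \<omega>}"
    by (auto simp: E_def)
  moreover have "E 1 = {\<omega> \<in> space M. U (Suc t) k \<omega> < c}"
    by (auto simp: E_def G_def K_def)
  moreover have "prob (\<Inter>i\<in>{0, 1}. E i) = (\<Prod>i\<in>{0, 1}. prob (E i))"
    unfolding E_def by (rule indep_varsD[OF indep_G]) simp_all
  moreover have "prob {\<omega> \<in> space M. U (Suc t) k \<omega> < c} = c"
    using k by (intro prob_uniform_less c measurable_U distr_U) auto
  moreover have "{\<omega> \<in> space M. X \<phi> \<gamma> x0 z t k \<omega> \<and> U (Suc t) k \<omega> < c}
      = {\<omega> \<in> space M. X \<phi> \<gamma> x0 z t k \<omega>} \<inter> {\<omega> \<in> space M. U (Suc t) k \<omega> < c}"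
    by auto
  ultimately show ?thesis
    by simp
qed

lemma prob_X_Suc:
  fixes x0 z
  assumes k: "k \<in> {1..N}"
    and "0 < \<phi>" "\<phi> < 1" "0 < \<gamma>" "\<gamma> < 1" "\<phi> + \<gamma> \<ge> 1"
  defines "p t \<equiv> prob {\<omega> \<in> space M. X \<phi> \<gamma> x0 z t k \<omega>}"
  shows "p (Suc t) = \<phi> + psi_par \<phi> \<gamma> * (1 - of_bool (z (Suc t) k) / alpha_par \<phi> \<gamma>) * (p t - \<gamma>)"
proof -
  define \<psi> where "\<psi> = psi_par \<phi> \<gamma>"
  define a where "a = (1 - \<phi>) / \<gamma>"
  define Xt where "Xt = X \<phi> \<gamma> x0 z t k"
  define V where "V = U (Suc t) k"
  have a: "0 \<le> a" "a \<le> 1" and \<psi>: "0 \<le> \<psi>" "\<psi> \<le> 1"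
    using assms(2-6) by (auto simp: a_def \<psi>_def psi_par_def field_simps)
  have [measurable]: "Measurable.pred M Xt" "V \<in> borel_measurable M"
    using k by (auto simp: Xt_def V_def intro: measurable_X measurable_U)
  have prob_a: "prob {\<omega> \<in> space M. Xt \<omega> \<and> V \<omega> < a} = p t * a"
    and prob_\<psi>: "prob {\<omega> \<in> space M. Xt \<omega> \<and> V \<omega> < \<psi>} = p t * \<psi>"
    unfolding p_def Xt_def V_def using k a \<psi> by (auto intro: prob_X_and_U_less)
  have prob_V: "prob {\<omega> \<in> space M. V \<omega> < \<psi>} = \<psi>"
    unfolding V_def using k by (intro prob_uniform_less \<psi> measurable_U distr_U) auto
  have "prob {\<omega> \<in> space M. \<not> Xt \<omega> \<and> V \<omega> < \<psi>}
      = prob ({\<omega> \<in> space M. V \<omega> < \<psi>} - {\<omega> \<in> space M. Xt \<omega> \<and> V \<omega> < \<psi>})"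
    by (rule arg_cong[where f = prob]) auto
  also have "\<dots> = \<psi> - p t * \<psi>"
    by (subst finite_measure_Diff) (auto simp: prob_V prob_\<psi>)
  finally have prob_not_\<psi>: "prob {\<omega> \<in> space M. \<not> Xt \<omega> \<and> V \<omega> < \<psi>} = \<psi> - p t * \<psi>" .
  have prob_not_a: "prob {\<omega> \<in> space M. \<not> (Xt \<omega> \<and> V \<omega> < a)} = 1 - p t * a"
    by (subst prob_neg) (measurable, simp add: prob_a)
  have prob_not_not_\<psi>: "prob {\<omega> \<in> space M. \<not> (\<not> Xt \<omega> \<and> V \<omega> < \<psi>)} = 1 - (\<psi> - p t * \<psi>)"
    by (subst prob_neg) (measurable, simp add: prob_not_\<psi>)
  have "p (Suc t) = prob {\<omega> \<in> space M. if z (Suc t) k then \<not> (Xt \<omega> \<and> V \<omega> < a)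
      else if \<phi> \<le> \<gamma> then Xt \<omega> \<and> V \<omega> < \<psi> else \<not> (\<not> Xt \<omega> \<and> V \<omega> < \<psi>)}"
    unfolding p_def Xproc_Suc Xt_def V_def a_def \<psi>_def ..
  also have "\<dots> = (if z (Suc t) k then 1 - p t * a
      else if \<phi> \<le> \<gamma> then p t * \<psi> else 1 - (\<psi> - p t * \<psi>))"
    by (cases "z (Suc t) k"; cases "\<phi> \<le> \<gamma>") (simp_all only: if_True if_False prob_not_a prob_\<psi> prob_not_not_\<psi>)
  also have "\<dots> = \<phi> + psi_par \<phi> \<gamma> * (1 - of_bool (z (Suc t) k) / alpha_par \<phi> \<gamma>) * (p t - \<gamma>)"
    unfolding a_def \<psi>_def using assms(2,4,5) by (rule transition_affine)
  finally show ?thesis .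
qed

lemma prob_X:
  assumes "k \<in> {1..N}" and "0 < \<phi>" "\<phi> < 1" "0 < \<gamma>" "\<gamma> < 1" "\<phi> + \<gamma> \<ge> 1"
  shows "prob {\<omega> \<in> space M. X \<phi> \<gamma> x0 z t k \<omega>} = p_prob \<phi> \<gamma> x0 z t k"
proof (induction t)
  case 0
  show ?case by (cases "x0 k") (simp_all add: p_prob_0 prob_space)
next
  case (Suc t)
  then show ?case
    using prob_X_Suc[OF assms] by (simp add: p_prob_Suc)
qed

end

theorem proposition3:
  fixes N :: nat and \<phi> \<gamma> :: real
    and M :: "'a measure"
    and U :: "nat \<Rightarrow> nat \<Rightarrow> 'a \<Rightarrow> real"
    and x0 :: "nat \<Rightarrow> bool" and z :: "nat \<Rightarrow> nat \<Rightarrow> bool"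
  assumes "N \<ge> 1"
    and "0 < \<phi>" "\<phi> < 1" "0 < \<gamma>" "\<gamma> < 1" "\<phi> + \<gamma> \<ge> 1"
    and "prob_space M"
    and "prob_space.indep_vars M (\<lambda>_. borel) (\<lambda>(t, k). U t k)
           {(t, k). t \<ge> 1 \<and> k \<in> {1..N}}"
    and "\<And>t k. t \<ge> 1 \<Longrightarrow> k \<in> {1..N} \<Longrightarrow>
           distr M lborel (U t k) = uniform_measure lborel {0<..<1::real}"
  shows "prob_space.indep_vars M (\<lambda>_. count_space UNIV)
           (\<lambda>k \<omega>. Xproc \<phi> \<gamma> x0 z (\<lambda>s j. U s j \<omega>) t k) {1..N}
       \<and> (\<forall>k \<in> {1..N}. measure M {\<omega> \<in> space M. Xproc \<phi> \<gamma> x0 z (\<lambda>s j. U s j \<omega>) t k}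
                         = p_prob \<phi> \<gamma> x0 z t k)"
proof -
  interpret uniform_noise M N U
    using assms(7-9) by (simp add: uniform_noise_def uniform_noise_axioms_def)
  show ?thesis
    using indep_vars_X prob_X assms(2-6) by blast
qed

end
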